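(* Let $\alpha>-1$ and let $n\ge 0$ be an integer, and let $\lambda_s$ be the smallest eigenvalue of the real symmetric matrix $\big((\alpha+1)_{j+k}\big)_{j,k=0}^{n}$. Then \[ \lambda_s\ \ge\ \left\{\sum_{\ell=0}^{n}\frac{\ell!}{(\alpha+1)_\ell}\,\big(L_\ell^{(\alpha)}(-1)\big)^2\right\}^{-1} =\frac{(\alpha+1)_n}{(n+1)!}\cdot\frac{1}{L_n^{(\alpha+1)}(-1)\,L_n^{(\alpha)}(-1)-L_{n+1}^{(\alpha)}(-1)\,L_{n-1}^{(\alpha+1)}(-1)} . \]
   Context: $(z)_m=z(z+1)\cdots(z+m-1)$, $(z)_0=1$. The Laguerre polynomials are $L_n^{(\alpha)}(x)=\frac{(\alpha+1)_n}{n!}\sum_{k=0}^{n}\frac{(-n)_k\,x^k}{(\alpha+1)_k\,k!}$ for $n\ge0$, with the convention $L_{-1}^{(\alpha)}(x)=0$. *)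

theory Defs
  imports Complex_Main "Jordan_Normal_Form.Char_Poly"
begin

definition laguerre :: "int \<Rightarrow> real \<Rightarrow> real \<Rightarrow> real" where
  "laguerre n a x = (if n < 0 then 0 else
     pochhammer (a + 1) (nat n) / fact (nat n) *
     (\<Sum>k = 0..nat n. pochhammer (- of_int n) k * x ^ k / (pochhammer (a + 1) k * fact k)))"

definition hankel_poch :: "real \<Rightarrow> nat \<Rightarrow> real mat" where
  "hankel_poch a n = mat (n + 1) (n + 1) (\<lambda>(j, k). pochhammer (a + 1) (j + k))"

end

theory Submission
  imports Defs
begin

text \<open>
  Write b = \<alpha> + 1 > 0 and H = ((b)_(j+k)) for j, k = 0..n.  The proof rests on an explicit
  LDL-factorisation H = L D L^T with L_(k,m) = C(k,m) (b)_k / (b)_m and D_m = m! (b)_m, whose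
  lower-triangular factor has the explicit inverse M_(m,j) = (-1)^(m+j) C(m,j) (b)_m / (b)_j.
  Both facts are finite-difference identities (alternating binomial sums of Pochhammer symbols).
  For an eigenvector w of H with eigenvalue \<lambda> put u = L^T w; then w^T H w = \<Sum> D_m u_m^2 and
  w = M^T u, so with C_m = \<Sum>_j |M_(m,j)| = m! L_m^(\<alpha>)(-1) we get
    |w|_2^2 \<le> |w|_1^2 \<le> (\<Sum> C_m |u_m|)^2 \<le> (\<Sum> C_m^2 / D_m) (w^T H w) = S \<lambda> |w|_2^2,
  where S = \<Sum> m!/(b)_m (L_m^(\<alpha>)(-1))^2; hence \<lambda> \<ge> 1/S.  The closed form of S is a
  Christoffel-Darboux type summation, proved by induction on n from the contiguous relation and
  the three-term recurrence of the Laguerre polynomials.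
\<close>

section \<open>Laguerre polynomials at negative arguments\<close>

text \<open>All coefficients of y \<mapsto> L_n^(b-1)(-y) are nonnegative for b > 0; we work with this
  normalisation throughout, with the coefficient of y^j given explicitly.\<close>

definition lag_coeff :: "real \<Rightarrow> nat \<Rightarrow> nat \<Rightarrow> real" where
  "lag_coeff b n j =
     (if j \<le> n then pochhammer (b + of_nat j) (n - j) / (fact j * fact (n - j)) else 0)"

definition lag_neg :: "real \<Rightarrow> nat \<Rightarrow> real \<Rightarrow> real" where
  "lag_neg b n y = (\<Sum>j\<le>n. lag_coeff b n j * y ^ j)"

lemma lag_neg_0 [simp]: "lag_neg b 0 y = 1"
  by (simp add: lag_neg_def lag_coeff_def)

lemma lag_neg_extend: "n \<le> N \<Longrightarrow> lag_neg b n y = (\<Sum>j\<le>N. lag_coeff b n j * y ^ j)"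
  unfolding lag_neg_def by (rule sum.mono_neutral_left) (auto simp: lag_coeff_def)

lemma lag_coeff_contiguous:
  "lag_coeff b (Suc n) j = lag_coeff (b + 1) (Suc n) j - lag_coeff (b + 1) n j"
proof (cases "j \<le> n")
  case True
  then obtain m where n: "n = j + m" using le_Suc_ex by blast
  define P where "P = pochhammer (b + 1 + of_nat j) m"
  define d where "d = fact j * (fact m :: real)"
  have nn: "Suc n - j = Suc m" "n - j = m" using n by auto
  have lhs: "lag_coeff b (Suc n) j = (b + of_nat j) * P / (d * (1 + of_nat m))"
    using True unfolding lag_coeff_def nn P_def d_def by (simp add: pochhammer_rec fact_Suc add_ac)
  have big: "lag_coeff (b + 1) (Suc n) j = P * (b + 1 + of_nat j + of_nat m) / (d * (1 + of_nat m))"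
    using True unfolding lag_coeff_def nn P_def d_def by (simp add: pochhammer_Suc fact_Suc add_ac)
  have small: "lag_coeff (b + 1) n j = P * (1 + of_nat m) / (d * (1 + of_nat m))"
    using True unfolding lag_coeff_def nn P_def d_def by simp
  have "(b + of_nat j) * P = P * (b + 1 + of_nat j + of_nat m) - P * (1 + of_nat m)"
    by (simp add: algebra_simps)
  then show ?thesis unfolding lhs big small by (simp add: diff_divide_distrib)
next
  case False
  then show ?thesis by (cases "j = Suc n") (auto simp: lag_coeff_def)
qed

lemma lag_neg_contiguous: "lag_neg b (Suc n) y = lag_neg (b + 1) (Suc n) y - lag_neg (b + 1) n y"
proof -
  have "lag_neg b (Suc n) y = (\<Sum>j\<le>Suc n. (lag_coeff (b + 1) (Suc n) j - lag_coeff (b + 1) n j) * y ^ j)"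
    unfolding lag_neg_def by (simp only: lag_coeff_contiguous[of b n])
  also have "\<dots> = lag_neg (b + 1) (Suc n) y - lag_neg (b + 1) n y"
    by (simp only: left_diff_distrib sum_subtractf lag_neg_def[of "b + 1" "Suc n"]
        lag_neg_extend[of n "Suc n" "b + 1" y, OF le_SucI[OF order_refl]])
  finally show ?thesis .
qed

lemma lag_coeff_recurrence_interior:
  assumes "i < n"
  shows "of_nat (Suc n) * lag_coeff b (Suc n) (Suc i) =
     (of_nat n + b) * lag_coeff b n (Suc i) + lag_coeff (b + 1) n i"
proof -
  obtain m where n: "n = Suc i + m" using assms less_iff_Suc_add by auto
  define P where "P = pochhammer (b + of_nat (Suc i)) m"
  define e where "e = (1 + of_nat i) * (fact i * fact m) * (1 + of_nat m :: real)"
  have pos: "1 + real m > 0" "1 + real i > 0" by auto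
  have nn: "Suc n - Suc i = Suc m" "n - Suc i = m" "n - i = Suc m" using n by auto
  have c1: "lag_coeff b (Suc n) (Suc i) = P * (b + of_nat (Suc i) + of_nat m) / e"
    unfolding lag_coeff_def nn P_def e_def using n by (simp add: pochhammer_Suc fact_Suc)
  have c2: "lag_coeff b n (Suc i) = P * (1 + of_nat m) / e"
    unfolding lag_coeff_def nn P_def e_def using n pos by (simp add: fact_Suc)
  have c3: "lag_coeff (b + 1) n i = P * (b + of_nat (Suc i) + of_nat m) * (1 + of_nat i) / e"
    unfolding lag_coeff_def nn P_def e_def using n pos by (simp add: pochhammer_Suc fact_Suc add_ac)
  have "of_nat (Suc n) * (P * (b + of_nat (Suc i) + of_nat m)) =
     (of_nat n + b) * (P * (1 + of_nat m)) + P * (b + of_nat (Suc i) + of_nat m) * (1 + of_nat i)"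
    using n by (simp add: algebra_simps)
  then show ?thesis
    unfolding c1 c2 c3 by (simp only: times_divide_eq_right add_divide_distrib)
qed

lemma lag_coeff_recurrence:
  "of_nat (Suc n) * lag_coeff b (Suc n) j =
     (of_nat n + b) * lag_coeff b n j + (if j = 0 then 0 else lag_coeff (b + 1) n (j - 1))"
proof -
  consider "j = 0" | "0 < j \<and> j \<le> n" | "j = Suc n" | "j > Suc n" by linarith
  then show ?thesis
  proof cases
    case 1
    have f: "fact n > (0::real)" "1 + real n > 0" by auto
    have "of_nat (Suc n) * lag_coeff b (Suc n) j = pochhammer b n * (b + of_nat n) / fact n"
      using 1 f unfolding lag_coeff_def by (simp add: pochhammer_Suc fact_Suc)
    moreover have "lag_coeff b n j = pochhammer b n / fact n"
      using 1 unfolding lag_coeff_def by simp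
    ultimately show ?thesis using 1 by (simp add: algebra_simps)
  next
    case 2
    then obtain i where "j = Suc i" "i < n" by (cases j) auto
    then show ?thesis using lag_coeff_recurrence_interior by simp
  next
    case 3
    have "(fact (Suc n) :: real) = of_nat (Suc n) * fact n" by (simp only: fact_Suc)
    moreover have "of_nat (Suc n) \<noteq> (0::real)" "(fact n :: real) \<noteq> 0" by auto
    ultimately show ?thesis using 3 by (simp add: lag_coeff_def)
  next
    case 4
    then show ?thesis by (simp add: lag_coeff_def)
  qed
qed

lemma lag_neg_recurrence:
  "of_nat (Suc n) * lag_neg b (Suc n) y = (of_nat n + b) * lag_neg b n y + y * lag_neg (b + 1) n y"
proof -
  define s where "s j = (if j = 0 then 0 else lag_coeff (b + 1) n (j - 1))" for j
  have shift: "y * lag_neg (b + 1) n y = (\<Sum>j\<le>Suc n. s j * y ^ j)"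
    unfolding lag_neg_def sum_distrib_left s_def
    by (subst sum.atMost_Suc_shift) (simp add: algebra_simps)
  have "of_nat (Suc n) * lag_neg b (Suc n) y = (\<Sum>j\<le>Suc n. (of_nat (Suc n) * lag_coeff b (Suc n) j) * y ^ j)"
    unfolding lag_neg_def sum_distrib_left by (simp add: mult.assoc)
  also have "\<dots> = (of_nat n + b) * (\<Sum>j\<le>Suc n. lag_coeff b n j * y ^ j) + (\<Sum>j\<le>Suc n. s j * y ^ j)"
    unfolding lag_coeff_recurrence s_def[symmetric]
    by (simp add: algebra_simps sum.distrib sum_distrib_left)
  also have "\<dots> = (of_nat n + b) * lag_neg b n y + y * lag_neg (b + 1) n y"
    using shift lag_neg_extend[of n "Suc n"] by simp
  finally show ?thesis .
qed

lemma laguerre_eq_lag_neg: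
  assumes "b > 0"
  shows "laguerre (int n) (b - 1) x = lag_neg b n (-x)"
proof -
  have term_eq: "pochhammer b n / fact n * (pochhammer (- of_int (int n)) k * x ^ k / (pochhammer b k * fact k))
      = lag_coeff b n k * (-x) ^ k" if k: "k \<le> n" for k
  proof -
    have p: "pochhammer (- of_int (int n)) k = (-1) ^ k * fact k * (of_nat (n choose k) :: real)"
      unfolding binomial_gbinomial gbinomial_pochhammer by (simp add: power_mult_distrib[symmetric])
    have bf: "(of_nat (n choose k) :: real) = fact n / (fact k * fact (n - k))"
      using k by (rule binomial_fact)
    have pp: "pochhammer b n = pochhammer b k * pochhammer (b + of_nat k) (n - k)"
      using k by (rule pochhammer_product)
    have pos: "pochhammer b k > 0" using assms by (simp add: pochhammer_pos)
    have cancel: "P * Q / A * (s * B * (A / (B * C)) * z / (P * B)) = Q / (B * C) * (s * z)"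
      if "P \<noteq> 0" "A \<noteq> 0" "B \<noteq> 0" "C \<noteq> 0" for P Q A B C s z :: real
      using that by (simp add: field_simps)
    show ?thesis
      using k cancel[of "pochhammer b k" "fact n" "fact k" "fact (n - k)"] pos
      unfolding lag_coeff_def p bf pp power_minus[of x k] by simp
  qed
  have "laguerre (int n) (b - 1) x = (\<Sum>k\<le>n. pochhammer b n / fact n *
     (pochhammer (- of_int (int n)) k * x ^ k / (pochhammer b k * fact k)))"
    unfolding laguerre_def by (simp add: sum_distrib_left atLeast0AtMost)
  also have "\<dots> = lag_neg b n (-x)"
    unfolding lag_neg_def by (rule sum.cong) (auto simp only: term_eq atMost_iff)
  finally show ?thesis .
qed

lemma laguerre_minus_one:
  assumes "c > -1"
  shows "laguerre (int n) c (-1) = lag_neg (c + 1) n 1"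
  using laguerre_eq_lag_neg[of "c + 1" n "-1"] assms by simp

lemma laguerre_pred_minus_one:
  assumes "c > -1"
  shows "laguerre (int n - 1) c (-1) = (if n = 0 then 0 else lag_neg (c + 1) (n - 1) 1)"
proof (cases n)
  case 0
  then show ?thesis by (simp add: laguerre_def)
next
  case (Suc k)
  then have "int n - 1 = int k" by simp
  then show ?thesis using laguerre_minus_one[OF assms, of k] Suc by simp
qed

section \<open>A Christoffel-Darboux type summation\<close>

text \<open>The algebraic core of the induction step: the contiguous relation (twice) and the
  three-term recurrence (twice) for F = L^(\<alpha>), G = L^(\<alpha>+1) at degrees N-1, N, N+1.\<close>
lemma christoffel_darboux_step:
  fixes a y N F0 F1 F2 Gm G0 G1 :: real
  assumes contig1: "F1 = G1 - G0" and contig0: "F0 = G0 - Gm"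
    and rec0: "(N + 1) * F1 = (N + a) * F0 + y * G0"
    and rec1: "(N + 2) * F2 = (N + 1 + a) * F1 + y * G1"
  shows "(N + 2) * (G1 * F1 - F2 * G0) = (a + N) * (G0 * F0 - F1 * Gm) + F1 ^ 2"
proof -
  have yG0: "y * G0 = (N + 1) * F1 - (N + a) * F0" using rec0 by linarith
  have "(N + 2) * (G1 * F1 - F2 * G0) = (N + 2) * G1 * F1 - G0 * ((N + 2) * F2)"
    by (simp add: algebra_simps)
  also have "\<dots> = (N + 2) * G1 * F1 - G0 * ((N + 1 + a) * F1) - G1 * (y * G0)"
    unfolding rec1 by (simp add: algebra_simps)
  also have "\<dots> = (N + 2) * G1 * F1 - G0 * ((N + 1 + a) * F1) - G1 * ((N + 1) * F1 - (N + a) * F0)"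
    by (simp only: yG0)
  also have "\<dots> = (a + N) * (G0 * F0 - F1 * Gm) + F1 ^ 2"
    unfolding contig1 contig0 power2_eq_square by (simp add: algebra_simps)
  finally show ?thesis .
qed

lemma christoffel_darboux_sum:
  assumes b: "b > 0"
  shows "(\<Sum>m\<le>n. fact m / pochhammer b m * (lag_neg b m y) ^ 2)
    = fact (Suc n) / pochhammer b n *
      (lag_neg (b + 1) n y * lag_neg b n y
       - lag_neg b (Suc n) y * (if n = 0 then 0 else lag_neg (b + 1) (n - 1) y))"
proof (induction n)
  case 0
  show ?case by simp
next
  case (Suc n)
  define F0 F1 F2 Gm G0 G1 where "F0 = lag_neg b n y" "F1 = lag_neg b (Suc n) y"
    "F2 = lag_neg b (Suc (Suc n)) y" "Gm = (if n = 0 then 0 else lag_neg (b + 1) (n - 1) y)"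
    "G0 = lag_neg (b + 1) n y" "G1 = lag_neg (b + 1) (Suc n) y"
  note defs = F0_F1_F2_Gm_G0_G1_def
  have contig0: "F0 = G0 - Gm"
    using lag_neg_contiguous[of b "n - 1" y] unfolding defs by (cases n) simp_all
  have step: "(real n + 2) * (G1 * F1 - F2 * G0) = (b + real n) * (G0 * F0 - F1 * Gm) + F1 ^ 2"
  proof (rule christoffel_darboux_step[OF _ contig0])
    show "F1 = G1 - G0" unfolding defs by (rule lag_neg_contiguous)
    show "(real n + 1) * F1 = (real n + b) * F0 + y * G0"
      using lag_neg_recurrence[of n b y] unfolding defs by (simp add: add.commute)
    show "(real n + 2) * F2 = (real n + 1 + b) * F1 + y * G1"
      using lag_neg_recurrence[of "Suc n" b y] unfolding defs by (simp add: add_ac)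
  qed
  define p where "p = pochhammer b n"
  have pos: "p > 0" "b + real n > 0" unfolding p_def using b by (simp_all add: pochhammer_pos)
  have poch_Suc: "pochhammer b (Suc n) = p * (b + real n)" unfolding p_def by (simp add: pochhammer_Suc)
  have "(\<Sum>m\<le>Suc n. fact m / pochhammer b m * (lag_neg b m y) ^ 2)
      = fact (Suc n) / p * (G0 * F0 - F1 * Gm) + fact (Suc n) / (p * (b + real n)) * F1 ^ 2"
    using Suc.IH poch_Suc unfolding defs p_def by simp
  also have "\<dots> = fact (Suc n) / (p * (b + real n)) * ((b + real n) * (G0 * F0 - F1 * Gm) + F1 ^ 2)"
  proof -
    have "c / p * Y + c / (p * e) * Z = c / (p * e) * (e * Y + Z)" if "p \<noteq> 0" "e \<noteq> 0"
      for c p e Y Z :: real using that by (simp add: field_simps)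
    then show ?thesis using pos by simp
  qed
  also have "\<dots> = fact (Suc (Suc n)) / (p * (b + real n)) * (G1 * F1 - F2 * G0)"
    unfolding step[symmetric] by (simp add: fact_Suc add_ac)
  finally show ?case unfolding defs poch_Suc by simp
qed

section \<open>Finite differences\<close>

text \<open>The m-th forward difference (up to the sign (-1)^m) of a sequence p at 0.\<close>
definition fin_diff :: "nat \<Rightarrow> (nat \<Rightarrow> real) \<Rightarrow> real" where
  "fin_diff m p = (\<Sum>j\<le>m. (-1) ^ j * of_nat (m choose j) * p j)"

lemma fin_diff_Suc: "fin_diff (Suc m) p = - fin_diff m (\<lambda>j. p (Suc j) - p j)"
proof -
  define A where "A = (\<Sum>i\<le>m. (-1) ^ i * of_nat (m choose i) * p (Suc i))"
  have split: "(-1) ^ Suc i * of_nat (Suc m choose Suc i) * p (Suc i)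
      = - ((-1) ^ i * of_nat (m choose i) * p (Suc i)) + (-1) ^ Suc i * of_nat (m choose Suc i) * p (Suc i)"
    for i by (simp add: ring_distribs)
  have rest: "p 0 + (\<Sum>i\<le>m. (-1) ^ Suc i * of_nat (m choose Suc i) * p (Suc i)) = fin_diff m p"
  proof -
    have "p 0 + (\<Sum>i\<le>m. (-1) ^ Suc i * of_nat (m choose Suc i) * p (Suc i))
      = (\<Sum>j\<le>Suc m. (-1) ^ j * of_nat (m choose j) * p j)"
      by (subst sum.atMost_Suc_shift) simp
    then show ?thesis unfolding fin_diff_def by simp
  qed
  have "fin_diff (Suc m) p = p 0 + (\<Sum>i\<le>m. (-1) ^ Suc i * of_nat (Suc m choose Suc i) * p (Suc i))"
    unfolding fin_diff_def by (subst sum.atMost_Suc_shift) simp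
  also have "\<dots> = - A + fin_diff m p"
    unfolding split sum.distrib A_def sum_negf rest[symmetric] by simp
  also have "\<dots> = - fin_diff m (\<lambda>j. p (Suc j) - p j)"
    unfolding fin_diff_def A_def by (simp add: sum_subtractf ring_distribs)
  finally show ?thesis .
qed

lemma fin_diff_cmult: "fin_diff m (\<lambda>j. c * p j) = c * fin_diff m p"
  unfolding fin_diff_def by (simp add: sum_distrib_left algebra_simps)

lemma fin_diff_pochhammer:
  "fin_diff m (\<lambda>j. pochhammer (b + of_nat j) k) =
     (-1) ^ m * (if m \<le> k then fact k / fact (k - m) * pochhammer (b + of_nat m) (k - m) else 0)"
proof (induction m arbitrary: b k)
  case 0
  then show ?case by (simp add: fin_diff_def)
next
  case (Suc m)
  show ?case
  proof (cases k)
    case 0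
    then show ?thesis unfolding fin_diff_Suc by (simp add: fin_diff_def)
  next
    case (Suc k')
    have diff: "pochhammer (b + of_nat (Suc j)) k - pochhammer (b + of_nat j) k
        = of_nat k * pochhammer (b + 1 + of_nat j) k'" for j
    proof -
      define Q where "Q = pochhammer (b + 1 + of_nat j) k'"
      have "pochhammer (b + of_nat (Suc j)) (Suc k') = Q * (b + 1 + of_nat j + of_nat k')"
        unfolding Q_def pochhammer_Suc by (simp add: add_ac)
      moreover have "pochhammer (b + of_nat j) (Suc k') = (b + of_nat j) * Q"
        unfolding Q_def pochhammer_rec by (simp add: add_ac)
      ultimately show ?thesis unfolding Suc Q_def[symmetric] by (simp add: algebra_simps)
    qed
    have "fin_diff (Suc m) (\<lambda>j. pochhammer (b + of_nat j) k)
        = - (of_nat k * fin_diff m (\<lambda>j. pochhammer (b + 1 + of_nat j) k'))"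
      by (simp only: fin_diff_Suc diff fin_diff_cmult)
    then show ?thesis
      unfolding Suc.IH using Suc by (simp add: fact_Suc add_ac)
  qed
qed

lemma fin_diff_choose: "fin_diff k (\<lambda>m. of_nat (m choose j)) = (if k = j then (-1) ^ k else 0)"
proof (induction k arbitrary: j)
  case 0
  then show ?case by (simp add: fin_diff_def)
next
  case (Suc k)
  show ?case
  proof (cases j)
    case 0
    then show ?thesis unfolding fin_diff_Suc by (simp add: fin_diff_def)
  next
    case (Suc j')
    have pascal: "(\<lambda>m. of_nat (Suc m choose j) - of_nat (m choose j) :: real) = (\<lambda>m. of_nat (m choose j'))"
      unfolding Suc by simp
    show ?thesis unfolding fin_diff_Suc pascal Suc.IH using Suc by simp
  qed
qed

section \<open>An explicit LDL-factorisation of the Hankel matrix\<close>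

text \<open>With b > 0, the matrix ((b)_(j+k)) equals L D L^T for the lower-triangular L and the
  diagonal D below; hankel_Linv is the inverse of L.\<close>

definition hankel_L :: "real \<Rightarrow> nat \<Rightarrow> nat \<Rightarrow> real" where
  "hankel_L b k m = of_nat (k choose m) * pochhammer b k / pochhammer b m"

definition hankel_Linv :: "real \<Rightarrow> nat \<Rightarrow> nat \<Rightarrow> real" where
  "hankel_Linv b m j = (-1) ^ (m + j) * of_nat (m choose j) * pochhammer b m / pochhammer b j"

definition hankel_D :: "real \<Rightarrow> nat \<Rightarrow> real" where
  "hankel_D b m = fact m * pochhammer b m"

lemma hankel_Linv_inverse:
  assumes b: "b > 0" and "j \<le> n" and kn: "k \<le> n"
  shows "(\<Sum>m\<le>n. hankel_Linv b m j * hankel_L b k m) = (if j = k then 1 else 0)"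
proof -
  have pos: "pochhammer b i > 0" for i using b by (simp add: pochhammer_pos)
  have "(\<Sum>m\<le>n. hankel_Linv b m j * hankel_L b k m) = (\<Sum>m\<le>k. hankel_Linv b m j * hankel_L b k m)"
    by (rule sum.mono_neutral_right) (auto simp: kn hankel_L_def)
  also have "\<dots> = (\<Sum>m\<le>k. pochhammer b k / pochhammer b j * (-1) ^ j *
                    ((-1) ^ m * of_nat (k choose m) * of_nat (m choose j)))"
  proof (rule sum.cong[OF refl])
    fix m
    have "pochhammer b m \<noteq> 0" using pos[of m] by simp
    then show "hankel_Linv b m j * hankel_L b k m = pochhammer b k / pochhammer b j * (-1) ^ j *
                 ((-1) ^ m * of_nat (k choose m) * of_nat (m choose j))"
      unfolding hankel_Linv_def hankel_L_def by (simp add: power_add field_simps)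
  qed
  also have "\<dots> = pochhammer b k / pochhammer b j * (-1) ^ j * fin_diff k (\<lambda>m. of_nat (m choose j))"
    unfolding fin_diff_def sum_distrib_left by (simp add: mult.assoc)
  also have "\<dots> = (if j = k then 1 else 0)"
    unfolding fin_diff_choose using pos[of k] by (auto simp: power_add[symmetric])
  finally show ?thesis .
qed

lemma hankel_Linv_hankel:
  assumes b: "b > 0" and mn: "m \<le> n"
  shows "(\<Sum>j\<le>n. hankel_Linv b m j * pochhammer b (j + k)) = hankel_D b m * hankel_L b k m"
proof -
  have pos: "pochhammer b i > 0" for i using b by (simp add: pochhammer_pos)
  have "(\<Sum>j\<le>n. hankel_Linv b m j * pochhammer b (j + k)) = (\<Sum>j\<le>m. hankel_Linv b m j * pochhammer b (j + k))"
    by (rule sum.mono_neutral_right) (auto simp: mn hankel_Linv_def)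
  also have "\<dots> = (\<Sum>j\<le>m. (-1) ^ m * pochhammer b m *
                    ((-1) ^ j * of_nat (m choose j) * pochhammer (b + of_nat j) k))"
  proof (rule sum.cong[OF refl])
    fix j
    have "pochhammer b j \<noteq> 0" using pos[of j] by simp
    then show "hankel_Linv b m j * pochhammer b (j + k) = (-1) ^ m * pochhammer b m *
                 ((-1) ^ j * of_nat (m choose j) * pochhammer (b + of_nat j) k)"
      unfolding hankel_Linv_def pochhammer_product' by (simp add: power_add field_simps)
  qed
  also have "\<dots> = (-1) ^ m * pochhammer b m * fin_diff m (\<lambda>j. pochhammer (b + of_nat j) k)"
    unfolding fin_diff_def sum_distrib_left by simp
  also have "\<dots> = pochhammer b m * (if m \<le> k then fact k / fact (k - m) * pochhammer (b + of_nat m) (k - m) else 0)"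
    unfolding fin_diff_pochhammer by (simp add: power_add[symmetric])
  also have "\<dots> = hankel_D b m * hankel_L b k m"
  proof (cases "m \<le> k")
    case True
    have "pochhammer b k = pochhammer b m * pochhammer (b + of_nat m) (k - m)"
      using True by (rule pochhammer_product)
    moreover have "(of_nat (k choose m) :: real) = fact k / (fact m * fact (k - m))"
      using True by (rule binomial_fact)
    moreover have "pochhammer b m \<noteq> 0" using pos[of m] by simp
    ultimately show ?thesis using True unfolding hankel_D_def hankel_L_def by (simp add: field_simps)
  qed (simp add: hankel_D_def hankel_L_def)
  finally show ?thesis .
qed

text \<open>The absolute row sums of L^(-1) are the values m! L_m^(b-1)(-1); this is where the
  Laguerre polynomials enter the bound.\<close>
lemma hankel_Linv_abs_row_sum:
  assumes b: "b > 0" and mn: "m \<le> n"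
  shows "(\<Sum>j\<le>n. \<bar>hankel_Linv b m j\<bar>) = fact m * lag_neg b m 1"
proof -
  have pos: "pochhammer b i > 0" for i using b by (simp add: pochhammer_pos)
  have "(\<Sum>j\<le>n. \<bar>hankel_Linv b m j\<bar>) = (\<Sum>j\<le>m. \<bar>hankel_Linv b m j\<bar>)"
    by (rule sum.mono_neutral_right) (auto simp: mn hankel_Linv_def)
  also have "\<dots> = (\<Sum>j\<le>m. fact m * lag_coeff b m j)"
  proof (rule sum.cong[OF refl])
    fix j assume "j \<in> {..m}"
    then have j: "j \<le> m" by simp
    have pp: "pochhammer b m = pochhammer b j * pochhammer (b + of_nat j) (m - j)"
      using j by (rule pochhammer_product)
    have bf: "(of_nat (m choose j) :: real) = fact m / (fact j * fact (m - j))"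
      using j by (rule binomial_fact)
    have "\<bar>hankel_Linv b m j\<bar> = of_nat (m choose j) * pochhammer b m / pochhammer b j"
      unfolding hankel_Linv_def using pos[of m] pos[of j] by (simp add: abs_mult)
    also have "\<dots> = fact m * lag_coeff b m j"
      unfolding lag_coeff_def bf pp using j pos[of j] by (simp add: field_simps)
    finally show "\<bar>hankel_Linv b m j\<bar> = fact m * lag_coeff b m j" .
  qed
  also have "\<dots> = fact m * lag_neg b m 1"
    unfolding lag_neg_def by (simp add: sum_distrib_left)
  finally show ?thesis .
qed

lemma hankel_coordinates_inverse:
  assumes b: "b > 0" and j: "j \<le> n"
  shows "(\<Sum>m\<le>n. hankel_Linv b m j * (\<Sum>k\<le>n. hankel_L b k m * v k)) = v j"
proof -
  have "(\<Sum>m\<le>n. hankel_Linv b m j * (\<Sum>k\<le>n. hankel_L b k m * v k))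
      = (\<Sum>k\<le>n. (\<Sum>m\<le>n. hankel_Linv b m j * hankel_L b k m) * v k)"
    unfolding sum_distrib_left sum_distrib_right mult.assoc by (rule sum.swap)
  also have "\<dots> = (\<Sum>k\<le>n. if j = k then v j else 0)"
    by (rule sum.cong[OF refl]) (simp add: hankel_Linv_inverse[OF b j])
  also have "\<dots> = v j" using j by simp
  finally show ?thesis .
qed

lemma hankel_quadratic_form_diagonal:
  assumes b: "b > 0"
  shows "(\<Sum>j\<le>n. \<Sum>k\<le>n. v j * pochhammer b (j + k) * v k)
       = (\<Sum>m\<le>n. hankel_D b m * (\<Sum>k\<le>n. hankel_L b k m * v k) ^ 2)"
proof -
  define u where "u m = (\<Sum>k\<le>n. hankel_L b k m * v k)" for m
  have "(\<Sum>j\<le>n. \<Sum>k\<le>n. v j * pochhammer b (j + k) * v k)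
      = (\<Sum>j\<le>n. \<Sum>k\<le>n. (\<Sum>m\<le>n. hankel_Linv b m j * u m) * pochhammer b (j + k) * v k)"
    unfolding u_def by (intro sum.cong refl) (simp add: hankel_coordinates_inverse[OF b])
  also have "\<dots> = (\<Sum>j\<le>n. \<Sum>m\<le>n. \<Sum>k\<le>n. hankel_Linv b m j * pochhammer b (j + k) * (u m * v k))"
  proof (rule sum.cong[OF refl])
    fix j
    have "(\<Sum>k\<le>n. (\<Sum>m\<le>n. hankel_Linv b m j * u m) * pochhammer b (j + k) * v k)
        = (\<Sum>k\<le>n. \<Sum>m\<le>n. hankel_Linv b m j * pochhammer b (j + k) * (u m * v k))"
      by (simp add: sum_distrib_left sum_distrib_right mult_ac)
    also have "\<dots> = (\<Sum>m\<le>n. \<Sum>k\<le>n. hankel_Linv b m j * pochhammer b (j + k) * (u m * v k))"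
      by (rule sum.swap)
    finally show "(\<Sum>k\<le>n. (\<Sum>m\<le>n. hankel_Linv b m j * u m) * pochhammer b (j + k) * v k)
        = (\<Sum>m\<le>n. \<Sum>k\<le>n. hankel_Linv b m j * pochhammer b (j + k) * (u m * v k))" .
  qed
  also have "\<dots> = (\<Sum>m\<le>n. \<Sum>k\<le>n. \<Sum>j\<le>n. hankel_Linv b m j * pochhammer b (j + k) * (u m * v k))"
    by (subst sum.swap) (intro sum.cong refl sum.swap)
  also have "\<dots> = (\<Sum>m\<le>n. u m * (\<Sum>k\<le>n. (\<Sum>j\<le>n. hankel_Linv b m j * pochhammer b (j + k)) * v k))"
    by (simp add: sum_distrib_left sum_distrib_right mult_ac)
  also have "\<dots> = (\<Sum>m\<le>n. hankel_D b m * u m ^ 2)"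
    by (intro sum.cong refl)
       (simp add: hankel_Linv_hankel[OF b] u_def power2_eq_square sum_distrib_left mult_ac)
  finally show ?thesis unfolding u_def .
qed

lemma hankel_l1_bound:
  fixes v :: "nat \<Rightarrow> real"
  assumes b: "b > 0"
  shows "(\<Sum>j\<le>n. \<bar>v j\<bar>) \<le> (\<Sum>m\<le>n. fact m * lag_neg b m 1 * \<bar>\<Sum>k\<le>n. hankel_L b k m * v k\<bar>)"
proof -
  define u where "u m = (\<Sum>k\<le>n. hankel_L b k m * v k)" for m
  have "(\<Sum>j\<le>n. \<bar>v j\<bar>) \<le> (\<Sum>j\<le>n. \<Sum>m\<le>n. \<bar>hankel_Linv b m j\<bar> * \<bar>u m\<bar>)"
  proof (rule sum_mono)
    fix j assume "j \<in> {..n}"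
    then have "v j = (\<Sum>m\<le>n. hankel_Linv b m j * u m)"
      unfolding u_def by (simp add: hankel_coordinates_inverse[OF b])
    then have "\<bar>v j\<bar> \<le> (\<Sum>m\<le>n. \<bar>hankel_Linv b m j * u m\<bar>)"
      by (simp add: sum_abs)
    then show "\<bar>v j\<bar> \<le> (\<Sum>m\<le>n. \<bar>hankel_Linv b m j\<bar> * \<bar>u m\<bar>)"
      by (simp add: abs_mult)
  qed
  also have "\<dots> = (\<Sum>m\<le>n. \<Sum>j\<le>n. \<bar>hankel_Linv b m j\<bar> * \<bar>u m\<bar>)"
    by (rule sum.swap)
  also have "\<dots> = (\<Sum>m\<le>n. fact m * lag_neg b m 1 * \<bar>u m\<bar>)"
  proof (rule sum.cong[OF refl])
    fix m assume "m \<in> {..n}"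
    then have "(\<Sum>j\<le>n. \<bar>hankel_Linv b m j\<bar>) = fact m * lag_neg b m 1"
      by (simp add: hankel_Linv_abs_row_sum[OF b])
    then show "(\<Sum>j\<le>n. \<bar>hankel_Linv b m j\<bar> * \<bar>u m\<bar>) = fact m * lag_neg b m 1 * \<bar>u m\<bar>"
      by (simp add: sum_distrib_right[symmetric])
  qed
  finally show ?thesis unfolding u_def .
qed

lemma sum_squares_le_square_sum_abs:
  fixes v :: "nat \<Rightarrow> real"
  assumes "finite A"
  shows "(\<Sum>j\<in>A. (v j) ^ 2) \<le> (\<Sum>j\<in>A. \<bar>v j\<bar>) ^ 2"
proof -
  have "(v i) ^ 2 \<le> (\<Sum>j\<in>A. \<bar>v i\<bar> * \<bar>v j\<bar>)" if "i \<in> A" for i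
  proof -
    have "(v i) ^ 2 = \<bar>v i\<bar> * \<bar>v i\<bar>" by (simp add: power2_eq_square)
    also have "\<dots> \<le> (\<Sum>j\<in>A. \<bar>v i\<bar> * \<bar>v j\<bar>)"
      by (rule member_le_sum) (use that assms in auto)
    finally show ?thesis .
  qed
  then have "(\<Sum>j\<in>A. (v j) ^ 2) \<le> (\<Sum>i\<in>A. \<Sum>j\<in>A. \<bar>v i\<bar> * \<bar>v j\<bar>)"
    by (rule sum_mono)
  also have "\<dots> = (\<Sum>j\<in>A. \<bar>v j\<bar>) ^ 2"
    by (simp add: power2_eq_square sum_product)
  finally show ?thesis .
qed

lemma cauchy_schwarz_sum:
  fixes x y :: "nat \<Rightarrow> real"
  shows "(\<Sum>i\<in>A. x i * y i) ^ 2 \<le> (\<Sum>i\<in>A. (x i) ^ 2) * (\<Sum>i\<in>A. (y i) ^ 2)"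
proof -
  have square: "(x i * y j - x j * y i) ^ 2
      = (x i) ^ 2 * (y j) ^ 2 + (y i) ^ 2 * (x j) ^ 2 - 2 * ((x i * y i) * (x j * y j))" for i j
    by (simp add: power2_eq_square algebra_simps)
  have "0 \<le> (\<Sum>i\<in>A. \<Sum>j\<in>A. (x i * y j - x j * y i) ^ 2)"
    by (intro sum_nonneg) auto
  also have "\<dots> = (\<Sum>i\<in>A. \<Sum>j\<in>A. (x i) ^ 2 * (y j) ^ 2) + (\<Sum>i\<in>A. \<Sum>j\<in>A. (y i) ^ 2 * (x j) ^ 2)
      - 2 * (\<Sum>i\<in>A. \<Sum>j\<in>A. (x i * y i) * (x j * y j))"
    unfolding square by (simp add: sum.distrib sum_subtractf sum_distrib_left)
  also have "\<dots> = 2 * ((\<Sum>i\<in>A. (x i) ^ 2) * (\<Sum>i\<in>A. (y i) ^ 2)) - 2 * (\<Sum>i\<in>A. x i * y i) ^ 2"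
    by (simp add: sum_product[symmetric] power2_eq_square)
  finally show ?thesis by simp
qed

lemma cauchy_schwarz_weighted:
  fixes c w d :: "nat \<Rightarrow> real"
  assumes "\<And>i. i \<in> A \<Longrightarrow> d i > 0"
  shows "(\<Sum>i\<in>A. c i * w i) ^ 2 \<le> (\<Sum>i\<in>A. (c i) ^ 2 / d i) * (\<Sum>i\<in>A. d i * (w i) ^ 2)"
proof -
  have terms: "c i / sqrt (d i) * (sqrt (d i) * w i) = c i * w i"
      "(c i / sqrt (d i)) ^ 2 = (c i) ^ 2 / d i" "(sqrt (d i) * w i) ^ 2 = d i * (w i) ^ 2"
    if "i \<in> A" for i
    using assms[OF that] by (simp_all add: power_divide power_mult_distrib)
  have "(\<Sum>i\<in>A. c i / sqrt (d i) * (sqrt (d i) * w i)) ^ 2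
     \<le> (\<Sum>i\<in>A. (c i / sqrt (d i)) ^ 2) * (\<Sum>i\<in>A. (sqrt (d i) * w i) ^ 2)"
    by (rule cauchy_schwarz_sum)
  moreover have "(\<Sum>i\<in>A. c i / sqrt (d i) * (sqrt (d i) * w i)) = (\<Sum>i\<in>A. c i * w i)"
    by (rule sum.cong[OF refl]) (rule terms(1))
  moreover have "(\<Sum>i\<in>A. (c i / sqrt (d i)) ^ 2) = (\<Sum>i\<in>A. (c i) ^ 2 / d i)"
    by (rule sum.cong[OF refl]) (rule terms(2))
  moreover have "(\<Sum>i\<in>A. (sqrt (d i) * w i) ^ 2) = (\<Sum>i\<in>A. d i * (w i) ^ 2)"
    by (rule sum.cong[OF refl]) (rule terms(3))
  ultimately show ?thesis by simp
qed

section \<open>The eigenvalue bound\<close>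

lemma hankel_quadratic_bound:
  fixes v :: "nat \<Rightarrow> real"
  assumes b: "b > 0"
  shows "(\<Sum>j\<le>n. (v j) ^ 2) \<le> (\<Sum>m\<le>n. fact m / pochhammer b m * (lag_neg b m 1) ^ 2) *
           (\<Sum>j\<le>n. \<Sum>k\<le>n. v j * pochhammer b (j + k) * v k)"
proof -
  define u where "u m = (\<Sum>k\<le>n. hankel_L b k m * v k)" for m
  define C where "C m = fact m * lag_neg b m 1" for m
  have D_pos: "hankel_D b m > 0" for m
    unfolding hankel_D_def using b by (simp add: pochhammer_pos)
  have l1_bound: "(\<Sum>j\<le>n. \<bar>v j\<bar>) \<le> (\<Sum>m\<le>n. C m * \<bar>u m\<bar>)"
    unfolding u_def C_def by (rule hankel_l1_bound[OF b])
  have "(\<Sum>j\<le>n. (v j) ^ 2) \<le> (\<Sum>j\<le>n. \<bar>v j\<bar>) ^ 2"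
    by (rule sum_squares_le_square_sum_abs) simp
  also have "\<dots> \<le> (\<Sum>m\<le>n. C m * \<bar>u m\<bar>) ^ 2"
    by (rule power_mono[OF l1_bound]) (simp add: sum_nonneg)
  also have "\<dots> \<le> (\<Sum>m\<le>n. (C m) ^ 2 / hankel_D b m) * (\<Sum>m\<le>n. hankel_D b m * \<bar>u m\<bar> ^ 2)"
    by (rule cauchy_schwarz_weighted) (simp add: D_pos)
  also have "\<dots> = (\<Sum>m\<le>n. fact m / pochhammer b m * (lag_neg b m 1) ^ 2) *
                  (\<Sum>j\<le>n. \<Sum>k\<le>n. v j * pochhammer b (j + k) * v k)"
  proof -
    have "(C m) ^ 2 / hankel_D b m = fact m / pochhammer b m * (lag_neg b m 1) ^ 2" for m
      unfolding C_def hankel_D_def by (simp add: power2_eq_square)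
    moreover have "(\<Sum>m\<le>n. hankel_D b m * \<bar>u m\<bar> ^ 2) = (\<Sum>j\<le>n. \<Sum>k\<le>n. v j * pochhammer b (j + k) * v k)"
      unfolding hankel_quadratic_form_diagonal[OF b] u_def by simp
    ultimately show ?thesis by simp
  qed
  finally show ?thesis .
qed

lemma hankel_eigenvalue_rayleigh:
  assumes "eigenvalue (hankel_poch a n) l"
  obtains w :: "nat \<Rightarrow> real"
  where "(\<Sum>j\<le>n. (w j) ^ 2) > 0"
    and "(\<Sum>j\<le>n. \<Sum>k\<le>n. w j * pochhammer (a + 1) (j + k) * w k) = l * (\<Sum>j\<le>n. (w j) ^ 2)"
proof -
  from assms obtain v where v: "v \<in> carrier_vec (n + 1)" "v \<noteq> 0\<^sub>v (n + 1)"
    and eigen: "hankel_poch a n *\<^sub>v v = l \<cdot>\<^sub>v v"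
    unfolding eigenvalue_def eigenvector_def hankel_poch_def by auto
  define w where "w j = v $ j" for j
  have row: "(\<Sum>k\<le>n. pochhammer (a + 1) (j + k) * w k) = l * w j" if "j \<le> n" for j
  proof -
    have "(hankel_poch a n *\<^sub>v v) $ j = (\<Sum>k\<le>n. pochhammer (a + 1) (j + k) * w k)"
      using that v unfolding hankel_poch_def w_def
      by (simp add: scalar_prod_def atLeast0LessThan lessThan_Suc_atMost)
    moreover have "(l \<cdot>\<^sub>v v) $ j = l * w j" using that v unfolding w_def by simp
    ultimately show ?thesis using eigen by simp
  qed
  have "(\<Sum>j\<le>n. \<Sum>k\<le>n. w j * pochhammer (a + 1) (j + k) * w k)
      = (\<Sum>j\<le>n. w j * (\<Sum>k\<le>n. pochhammer (a + 1) (j + k) * w k))"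
    by (simp add: sum_distrib_left mult.assoc)
  also have "\<dots> = (\<Sum>j\<le>n. w j * (l * w j))"
    by (rule sum.cong[OF refl]) (simp add: row)
  also have "\<dots> = l * (\<Sum>j\<le>n. (w j) ^ 2)"
    by (simp add: sum_distrib_left power2_eq_square mult_ac)
  finally have rayleigh: "(\<Sum>j\<le>n. \<Sum>k\<le>n. w j * pochhammer (a + 1) (j + k) * w k) = l * (\<Sum>j\<le>n. (w j) ^ 2)" .
  obtain j where j: "j \<le> n" "w j \<noteq> 0"
    using v unfolding w_def by (metis Suc_eq_plus1 less_Suc_eq_le carrier_vecD eq_vecI index_zero_vec)
  have "(w j) ^ 2 \<le> (\<Sum>j\<le>n. (w j) ^ 2)"
    by (rule member_le_sum) (use j in auto)
  then have "(\<Sum>j\<le>n. (w j) ^ 2) > 0"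
    using j by (meson order_less_le_trans zero_less_power2)
  then show ?thesis using rayleigh that by blast
qed

lemma hankel_eigenvalue_bound:
  assumes a: "a > -1" and ev: "eigenvalue (hankel_poch a n) l"
  shows "l \<ge> 1 / (\<Sum>m\<le>n. fact m / pochhammer (a + 1) m * (laguerre (int m) a (-1)) ^ 2)"
proof -
  define S where "S = (\<Sum>m\<le>n. fact m / pochhammer (a + 1) m * (lag_neg (a + 1) m 1) ^ 2)"
  obtain w where norm: "(\<Sum>j\<le>n. (w j) ^ 2) > 0"
    and rayleigh: "(\<Sum>j\<le>n. \<Sum>k\<le>n. w j * pochhammer (a + 1) (j + k) * w k) = l * (\<Sum>j\<le>n. (w j) ^ 2)"
    using hankel_eigenvalue_rayleigh[OF ev] by blast
  have "1 * (\<Sum>j\<le>n. (w j) ^ 2) \<le> (S * l) * (\<Sum>j\<le>n. (w j) ^ 2)"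
    using hankel_quadratic_bound[of "a + 1" w n] a unfolding rayleigh S_def by (simp add: mult_ac)
  then have Sl: "1 \<le> S * l" using norm by (simp add: mult_le_cancel_right)
  have "S \<ge> 0" unfolding S_def
    by (intro sum_nonneg mult_nonneg_nonneg divide_nonneg_pos) (use a in \<open>simp_all add: pochhammer_pos\<close>)
  then have "S > 0" using Sl by (cases "S = 0") auto
  then show ?thesis using Sl unfolding laguerre_minus_one[OF a] S_def[symmetric] by (simp add: field_simps)
qed

lemma laguerre_weighted_sum_closed_form:
  assumes a: "a > -1"
  shows "(\<Sum>m\<le>n. fact m / pochhammer (a + 1) m * (laguerre (int m) a (-1)) ^ 2)
    = fact (n + 1) / pochhammer (a + 1) n *
      (laguerre (int n) (a + 1) (-1) * laguerre (int n) a (-1)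
       - laguerre (int n + 1) a (-1) * laguerre (int n - 1) (a + 1) (-1))"
proof -
  have a1: "a + 1 > -1" using a by simp
  have succ: "laguerre (int n + 1) a (-1) = lag_neg (a + 1) (Suc n) 1"
    using laguerre_minus_one[OF a, of "Suc n"] by (simp add: add.commute)
  show ?thesis
    unfolding succ laguerre_minus_one[OF a] laguerre_minus_one[OF a1]
      laguerre_pred_minus_one[OF a1] Suc_eq_plus1[symmetric]
    by (rule christoffel_darboux_sum) (use a in simp)
qed

theorem mainTheorem3:
  fixes a :: real and n :: nat
  assumes "a > -1"
  shows "(\<forall>l. eigenvalue (hankel_poch a n) l \<longrightarrow>
            l \<ge> 1 / (\<Sum>m = 0..n. fact m / pochhammer (a + 1) m * (laguerre (int m) a (-1))^2))
       \<and> 1 / (\<Sum>m = 0..n. fact m / pochhammer (a + 1) m * (laguerre (int m) a (-1))^2)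
         = pochhammer (a + 1) n / fact (n + 1) *
           (1 / (laguerre (int n) (a + 1) (-1) * laguerre (int n) a (-1)
                 - laguerre (int n + 1) a (-1) * laguerre (int n - 1) (a + 1) (-1)))"
  using hankel_eigenvalue_bound[OF assms, of n] laguerre_weighted_sum_closed_form[OF assms, of n]
  unfolding atLeast0AtMost by simp

end
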